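(* Let $k$ be a field and $V$ a $k$-vector space of dimension $n>1$. Define $b:(k\oplus V)\times(k\oplus V)\to V$ by $b(\alpha\oplus u,\beta\oplus v)=\alpha v-\beta u$. Then $b$ is alternating and $$\operatorname{Adj}(b)\cong\left\{\begin{bmatrix}\alpha1_k & h\\ 0 & \beta 1_V\end{bmatrix}: h\in\hom(k,V),\ \alpha,\beta\in k\right\},$$ acting on $k\oplus V$ by matrix multiplication, with involution $\begin{bmatrix}\alpha1_k & h\\ 0&\beta1_V\end{bmatrix}^*=\begin{bmatrix}\beta1_k&-h\\0&\alpha1_V\end{bmatrix}$. In particular the Jacobson radical of $\operatorname{Adj}(b)$ is $\left\{\begin{bmatrix}0&h\\0&0\end{bmatrix}:h\in\hom(k,V)\right\}$, $\operatorname{Adj}(b)/\operatorname{rad}\operatorname{Adj}(b)\cong k\oplus k$ with the exchange involution $(x,y)\mapsto(y,x)$, and $b$ is $\perp$-indecomposable (of exchange type).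
   Context: $\operatorname{Adj}(b)$ is the set of $f\in\operatorname{End}(k\oplus V)$ for which there is $f^*$ with $b(uf,v)=b(u,vf^* )$ for all $u,v$, with involution $f\mapsto f^*$. $b$ is $\perp$-indecomposable if $k\oplus V$ has no decomposition into a set $\mathcal{X}\neq\{k\oplus V\}$ of pairwise $b$-orthogonal subspaces generating the space with no proper subset generating it. *)

theory Defs
  imports Main "HOL.Vector_Spaces" "HOL-Library.Product_Plus" "HOL-Algebra.QuotRing"
begin

text \<open>The space k (+) V is modelled as the product type 'a \<times> 'v, where 'a is the field k
  and 'v carries the k-vector space structure given by the scalar multiplication s.\<close>

definition pscale :: "('a::field \<Rightarrow> 'v::ab_group_add \<Rightarrow> 'v) \<Rightarrow> 'a \<Rightarrow> 'a \<times> 'v \<Rightarrow> 'a \<times> 'v" where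
  "pscale s c w = (c * fst w, s c (snd w))"

definition bmap :: "('a::field \<Rightarrow> 'v::ab_group_add \<Rightarrow> 'v) \<Rightarrow> 'a \<times> 'v \<Rightarrow> 'a \<times> 'v \<Rightarrow> 'v" where
  "bmap s w w' = s (fst w) (snd w') - s (fst w') (snd w)"

text \<open>End(k (+) V): k-linear endomorphisms. Maps act on the right: u f is written f u.\<close>
definition End :: "('a::field \<Rightarrow> 'v::ab_group_add \<Rightarrow> 'v) \<Rightarrow> ('a \<times> 'v \<Rightarrow> 'a \<times> 'v) set" where
  "End s = {f. Vector_Spaces.linear (pscale s) (pscale s) f}"

definition is_adj :: "('w \<Rightarrow> 'w \<Rightarrow> 'c) \<Rightarrow> ('w \<Rightarrow> 'w) \<Rightarrow> ('w \<Rightarrow> 'w) \<Rightarrow> bool" where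
  "is_adj b f g \<longleftrightarrow> (\<forall>u v. b (f u) v = b u (g v))"

definition Adj :: "('a::field \<Rightarrow> 'v::ab_group_add \<Rightarrow> 'v) \<Rightarrow> ('a \<times> 'v \<Rightarrow> 'a \<times> 'v \<Rightarrow> 'c)
    \<Rightarrow> ('a \<times> 'v \<Rightarrow> 'a \<times> 'v) set" where
  "Adj s b = {f \<in> End s. \<exists>g \<in> End s. is_adj b f g}"

definition adj_star :: "('a::field \<Rightarrow> 'v::ab_group_add \<Rightarrow> 'v) \<Rightarrow> ('a \<times> 'v \<Rightarrow> 'a \<times> 'v \<Rightarrow> 'c)
    \<Rightarrow> ('a \<times> 'v \<Rightarrow> 'a \<times> 'v) \<Rightarrow> ('a \<times> 'v \<Rightarrow> 'a \<times> 'v)" where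
  "adj_star s b f = (THE g. g \<in> End s \<and> is_adj b f g)"

text \<open>Adj(b) as a ring (HOL-Algebra record). Since maps act on the right,
  the product f g is "first f, then g", i.e. g \<circ> f.\<close>
definition Adj_ring :: "('a::field \<Rightarrow> 'v::ab_group_add \<Rightarrow> 'v) \<Rightarrow> ('a \<times> 'v \<Rightarrow> 'a \<times> 'v \<Rightarrow> 'c)
    \<Rightarrow> ('a \<times> 'v \<Rightarrow> 'a \<times> 'v) ring" where
  "Adj_ring s b = \<lparr>carrier = Adj s b, mult = (\<lambda>f g. g \<circ> f), one = id,
     zero = (\<lambda>w. (0, 0)), add = (\<lambda>f g w. (fst (f w) + fst (g w), snd (f w) + snd (g w)))\<rparr>"

text \<open>The matrix [alpha 1_k, h; 0, beta 1_V] (h \<in> hom(k,V) identified with h(1) \<in> V),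
  acting on row vectors (x, u) by right multiplication: (x, u) \<mapsto> (x alpha, x h + u beta).\<close>
definition tri :: "('a::field \<Rightarrow> 'v::ab_group_add \<Rightarrow> 'v) \<Rightarrow> 'a \<Rightarrow> 'v \<Rightarrow> 'a \<Rightarrow> 'a \<times> 'v \<Rightarrow> 'a \<times> 'v" where
  "tri s \<alpha> h \<beta> w = (fst w * \<alpha>, s (fst w) h + s \<beta> (snd w))"

definition left_ideal :: "'a set \<Rightarrow> ('a, 'b) ring_scheme \<Rightarrow> bool" where
  "left_ideal I R \<longleftrightarrow> additive_subgroup I R \<and> (\<forall>a \<in> carrier R. \<forall>x \<in> I. a \<otimes>\<^bsub>R\<^esub> x \<in> I)"

definition maximal_left_ideal :: "'a set \<Rightarrow> ('a, 'b) ring_scheme \<Rightarrow> bool" where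
  "maximal_left_ideal I R \<longleftrightarrow> left_ideal I R \<and> I \<noteq> carrier R \<and>
     (\<forall>J. left_ideal J R \<and> I \<subseteq> J \<longrightarrow> J = I \<or> J = carrier R)"

definition jacobson_radical :: "('a, 'b) ring_scheme \<Rightarrow> 'a set" where
  "jacobson_radical R = {x \<in> carrier R. \<forall>I. maximal_left_ideal I R \<longrightarrow> x \<in> I}"

definition kk_ring :: "('a::field \<times> 'a) ring" where
  "kk_ring = \<lparr>carrier = UNIV, mult = (\<lambda>p q. (fst p * fst q, snd p * snd q)), one = (1, 1),
     zero = (0, 0), add = (\<lambda>p q. (fst p + fst q, snd p + snd q))\<rparr>"

definition exch :: "'a \<times> 'a \<Rightarrow> 'a \<times> 'a" where
  "exch p = (snd p, fst p)"

definition alternating :: "('w \<Rightarrow> 'w \<Rightarrow> 'v::zero) \<Rightarrow> bool" where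
  "alternating b \<longleftrightarrow> (\<forall>w. b w w = 0)"

definition perp_indecomposable :: "('a::field \<Rightarrow> 'v::ab_group_add \<Rightarrow> 'v)
    \<Rightarrow> ('a \<times> 'v \<Rightarrow> 'a \<times> 'v \<Rightarrow> 'c::zero) \<Rightarrow> bool" where
  "perp_indecomposable s b \<longleftrightarrow>
     \<not> (\<exists>X. X \<noteq> {UNIV} \<and>
          (\<forall>S \<in> X. module.subspace (pscale s) S) \<and>
          (\<forall>S \<in> X. \<forall>T \<in> X. S \<noteq> T \<longrightarrow> (\<forall>x \<in> S. \<forall>y \<in> T. b x y = 0)) \<and>
          module.span (pscale s) (\<Union>X) = UNIV \<and>
          (\<forall>Y. Y \<subset> X \<longrightarrow> module.span (pscale s) (\<Union>Y) \<noteq> UNIV))"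

end

theory Submission
  imports Defs
begin

text \<open>An adjoint pair \<open>(f, g)\<close> is determined by \<open>f(1 \<oplus> 0)\<close> and \<open>g(1 \<oplus> 0)\<close>. Pairing
  \<open>0 \<oplus> u\<close> with \<open>0 \<oplus> v\<close> shows that the \<open>k\<close>-component of \<open>f(0 \<oplus> u)\<close> times \<open>v\<close> lies in the
  line \<open>ku\<close> for every \<open>v\<close>, so it vanishes because \<open>dim V > 1\<close>; hence \<open>f\<close> and \<open>g\<close> preserve
  \<open>0 \<oplus> V\<close>, and pairing with \<open>1 \<oplus> 0\<close> shows that they act there by scalars. This gives the
  upper triangular form of \<open>Adj(b)\<close>. The diagonal entries \<open>\<alpha>\<close> and \<open>\<beta>\<close> are characters of
  \<open>Adj(b)\<close> onto \<open>k\<close>, so their kernels are maximal left ideals, while the strictly upper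
  triangular part is a square-zero ideal and thus lies in every maximal left ideal. So the
  radical is the kernel of \<open>(\<alpha>, \<beta>)\<close>, the first isomorphism theorem identifies the quotient
  with \<open>k \<oplus> k\<close>, and the adjoint, which swaps \<open>\<alpha>\<close> and \<open>\<beta>\<close>, induces the exchange. Finally,
  the orthogonal complement of a vector with nonzero \<open>k\<close>-component is its own line, so in an
  orthogonal decomposition the summand containing such a vector absorbs all the others.\<close>

context ring
begin

lemma left_idealI:
  assumes sub: "I \<subseteq> carrier R" and zero: "\<zero> \<in> I"
    and add: "\<And>x y. x \<in> I \<Longrightarrow> y \<in> I \<Longrightarrow> x \<oplus> y \<in> I"
    and mult: "\<And>r x. r \<in> carrier R \<Longrightarrow> x \<in> I \<Longrightarrow> r \<otimes> x \<in> I"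
  shows "left_ideal I R"
proof -
  have "\<ominus> x \<in> I" if "x \<in> I" for x
    using mult[of "\<ominus> \<one>" x] that sub by (auto simp: l_minus)
  then have "additive_subgroup I R"
    by (intro additive_subgroupI add.subgroupI) (use sub zero add in \<open>auto simp: a_inv_def\<close>)
  with mult show ?thesis
    by (simp add: left_ideal_def)
qed

lemma left_ideal_one_imp_carrier:
  assumes I: "left_ideal I R" and one: "\<one> \<in> I"
  shows "I = carrier R"
proof
  show "I \<subseteq> carrier R"
    using I additive_subgroup.a_subset by (auto simp: left_ideal_def)
  show "carrier R \<subseteq> I"
    using I one by (force simp: left_ideal_def)
qed

lemma maximal_left_ideal_kernel:
  fixes \<chi> :: "'a \<Rightarrow> 'k::field"
  assumes add: "\<And>x y. x \<in> carrier R \<Longrightarrow> y \<in> carrier R \<Longrightarrow> \<chi> (x \<oplus> y) = \<chi> x + \<chi> y"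
    and mult: "\<And>x y. x \<in> carrier R \<Longrightarrow> y \<in> carrier R \<Longrightarrow> \<chi> (x \<otimes> y) = \<chi> x * \<chi> y"
    and one: "\<chi> \<one> = 1"
    and surj: "\<And>c. \<exists>x \<in> carrier R. \<chi> x = c"
  shows "maximal_left_ideal {x \<in> carrier R. \<chi> x = 0} R" (is "maximal_left_ideal ?K R")
proof -
  have "\<chi> \<zero> + \<chi> \<zero> = \<chi> \<zero> + 0"
    using add[of \<zero> \<zero>] by simp
  then have zero: "\<chi> \<zero> = 0"
    by (rule add_left_imp_eq)
  have neg: "\<chi> (\<ominus> x) = - \<chi> x" if "x \<in> carrier R" for x
  proof -
    have "\<chi> x + \<chi> (\<ominus> x) = 0"
      using add[of x "\<ominus> x"] that by (simp add: r_neg zero)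
    then show ?thesis
      by (simp add: eq_neg_iff_add_eq_0 add.commute)
  qed
  have K: "left_ideal ?K R"
    by (rule left_idealI) (auto simp: zero add mult)
  have "J = carrier R" if J: "left_ideal J R" "?K \<subseteq> J" "J \<noteq> ?K" for J
  proof -
    have "J \<subseteq> carrier R"
      using J(1) additive_subgroup.a_subset by (auto simp: left_ideal_def)
    moreover obtain x where "x \<in> J" "x \<notin> ?K"
      using J(2,3) by (meson subset_antisym subsetI)
    ultimately have x: "x \<in> J" "x \<in> carrier R" "\<chi> x \<noteq> 0"
      by auto
    obtain y where y: "y \<in> carrier R" "\<chi> y = inverse (\<chi> x)"
      using surj by blast
    have yx: "y \<otimes> x \<in> J"
      using J(1) x y by (simp add: left_ideal_def)
    have "\<one> \<ominus> y \<otimes> x \<in> ?K"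
      using x y by (simp add: a_minus_def add neg mult one)
    then have "(\<one> \<ominus> y \<otimes> x) \<oplus> y \<otimes> x \<in> J"
      using J yx by (metis left_ideal_def additive_subgroup.a_closed subsetD)
    moreover have "(\<one> \<ominus> y \<otimes> x) \<oplus> y \<otimes> x = \<one>"
      using x y by (simp add: a_minus_def add.m_assoc l_neg)
    ultimately have "\<one> \<in> J"
      by simp
    then show ?thesis
      using J(1) left_ideal_one_imp_carrier by blast
  qed
  moreover have "?K \<noteq> carrier R"
    using one by force
  ultimately show ?thesis
    using K by (auto simp: maximal_left_ideal_def)
qed

lemma left_ideal_add_principal:
  assumes I: "left_ideal I R" and x: "x \<in> carrier R"
  shows "left_ideal {i \<oplus> r \<otimes> x | i r. i \<in> I \<and> r \<in> carrier R} R"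
proof -
  have I_sub: "I \<subseteq> carrier R" and I_zero: "\<zero> \<in> I"
    and I_add: "\<And>i j. i \<in> I \<Longrightarrow> j \<in> I \<Longrightarrow> i \<oplus> j \<in> I"
    and I_mult: "\<And>r i. r \<in> carrier R \<Longrightarrow> i \<in> I \<Longrightarrow> r \<otimes> i \<in> I"
    using I additive_subgroup.a_subset additive_subgroup.zero_closed additive_subgroup.a_closed
    by (auto simp: left_ideal_def)
  show ?thesis
  proof (rule left_idealI)
    show "\<zero> \<in> {i \<oplus> r \<otimes> x | i r. i \<in> I \<and> r \<in> carrier R}"
      using I_zero x by (intro CollectI exI[of _ \<zero>]) auto
  next
    fix y z assume "y \<in> {i \<oplus> r \<otimes> x | i r. i \<in> I \<and> r \<in> carrier R}"
      and "z \<in> {i \<oplus> r \<otimes> x | i r. i \<in> I \<and> r \<in> carrier R}"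
    then obtain i r j t where "y = i \<oplus> r \<otimes> x" "z = j \<oplus> t \<otimes> x"
      and "i \<in> I" "j \<in> I" "r \<in> carrier R" "t \<in> carrier R"
      by blast
    moreover from this have "y \<oplus> z = (i \<oplus> j) \<oplus> (r \<oplus> t) \<otimes> x"
      using I_sub x by (simp add: l_distr a_ac subsetD)
    ultimately show "y \<oplus> z \<in> {i \<oplus> r \<otimes> x | i r. i \<in> I \<and> r \<in> carrier R}"
      using I_add by blast
  next
    fix t y assume t: "t \<in> carrier R" and "y \<in> {i \<oplus> r \<otimes> x | i r. i \<in> I \<and> r \<in> carrier R}"
    then obtain i r where "y = i \<oplus> r \<otimes> x" "i \<in> I" "r \<in> carrier R"
      by blast
    moreover from this have "t \<otimes> y = t \<otimes> i \<oplus> (t \<otimes> r) \<otimes> x"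
      using I_sub x t by (simp add: r_distr m_assoc subsetD)
    ultimately show "t \<otimes> y \<in> {i \<oplus> r \<otimes> x | i r. i \<in> I \<and> r \<in> carrier R}"
      using I_mult t by blast
  qed (use I_sub x in auto)
qed

lemma left_quasiregular_in_maximal_left_ideal:
  assumes x: "x \<in> carrier R"
    and qr: "\<And>r. r \<in> carrier R \<Longrightarrow> \<exists>y \<in> carrier R. y \<otimes> (\<one> \<oplus> r \<otimes> x) = \<one>"
    and I: "maximal_left_ideal I R"
  shows "x \<in> I"
proof (rule ccontr)
  assume "x \<notin> I"
  have I_ideal: "left_ideal I R" and I_proper: "I \<noteq> carrier R"
    and I_max: "\<And>J. left_ideal J R \<Longrightarrow> I \<subseteq> J \<Longrightarrow> J = I \<or> J = carrier R"
    using I by (auto simp: maximal_left_ideal_def)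
  have I_sub: "I \<subseteq> carrier R"
    using I_ideal additive_subgroup.a_subset by (auto simp: left_ideal_def)
  define J where "J = {i \<oplus> r \<otimes> x | i r. i \<in> I \<and> r \<in> carrier R}"
  have J_ideal: "left_ideal J R"
    unfolding J_def using I_ideal x by (rule left_ideal_add_principal)
  have "I \<subseteq> J"
  proof
    fix i assume "i \<in> I"
    moreover from this have "i = i \<oplus> \<zero> \<otimes> x"
      using I_sub x by (simp add: subsetD)
    ultimately show "i \<in> J"
      unfolding J_def by blast
  qed
  moreover have "x \<in> J"
  proof -
    have "\<zero> \<in> I"
      using I_ideal additive_subgroup.zero_closed by (auto simp: left_ideal_def)
    then show ?thesis
      unfolding J_def using x by (intro CollectI exI[of _ \<zero>] exI[of _ \<one>]) simp
  qed
  ultimately have "\<one> \<in> J"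
    using I_max[OF J_ideal] \<open>x \<notin> I\<close> by blast
  then obtain i r where i: "i \<in> I" and r: "r \<in> carrier R" and one: "\<one> = i \<oplus> r \<otimes> x"
    unfolding J_def by blast
  have i_carrier: "i \<in> carrier R"
    using i I_sub by blast
  have "i = (i \<oplus> r \<otimes> x) \<oplus> \<ominus> (r \<otimes> x)"
    using i_carrier r x by (simp add: add.m_assoc r_neg)
  also have "\<dots> = \<one> \<oplus> (\<ominus> r) \<otimes> x"
    using one r x by (simp add: l_minus)
  finally have "i = \<one> \<oplus> (\<ominus> r) \<otimes> x" .
  then obtain y where "y \<in> carrier R" "y \<otimes> i = \<one>"
    using qr[of "\<ominus> r"] r by auto
  then have "\<one> \<in> I"
    using I_ideal i by (metis left_ideal_def)
  with I_proper I_ideal show False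
    using left_ideal_one_imp_carrier by blast
qed

lemma left_quasiregular_in_jacobson_radical:
  assumes "x \<in> carrier R"
    and "\<And>r. r \<in> carrier R \<Longrightarrow> \<exists>y \<in> carrier R. y \<otimes> (\<one> \<oplus> r \<otimes> x) = \<one>"
  shows "x \<in> jacobson_radical R"
  using assms left_quasiregular_in_maximal_left_ideal by (simp add: jacobson_radical_def)

end

lemma ring_kk_ring: "ring (kk_ring :: ('a::field \<times> 'a) ring)"
proof (rule ringI)
  show "abelian_group (kk_ring :: ('a \<times> 'a) ring)"
  proof (rule abelian_groupI)
    fix x :: "'a \<times> 'a"
    show "\<exists>y \<in> carrier kk_ring. y \<oplus>\<^bsub>kk_ring\<^esub> x = \<zero>\<^bsub>kk_ring\<^esub>"
      by (rule bexI[of _ "- x"]) (auto simp: kk_ring_def)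
  qed (auto simp: kk_ring_def)
  show "monoid (kk_ring :: ('a \<times> 'a) ring)"
    by (rule monoidI) (auto simp: kk_ring_def)
qed (auto simp: kk_ring_def algebra_simps)

context vector_space
begin

lemma vector_space_pscale: "vector_space (pscale scale)"
  unfolding vector_space_def pscale_def
  by (auto simp: algebra_simps scale_right_distrib scale_left_distrib)

lemma linear_tri: "Vector_Spaces.linear (pscale scale) (pscale scale) (tri scale \<alpha> h \<beta>)"
  unfolding Vector_Spaces.linear_def module_hom_def module_hom_axioms_def module_iff_vector_space
  using vector_space_pscale
  by (auto simp: pscale_def tri_def algebra_simps scale_right_distrib scale_left_distrib)

lemma tri_in_End: "tri scale \<alpha> h \<beta> \<in> End scale"
  using linear_tri by (simp add: End_def)

lemma tri_comp_tri:
  "tri scale \<alpha>' h' \<beta>' \<circ> tri scale \<alpha> h \<beta> = tri scale (\<alpha> * \<alpha>') (scale \<alpha> h' + scale \<beta>' h) (\<beta> * \<beta>')"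
  by (auto simp: tri_def fun_eq_iff algebra_simps scale_right_distrib mult.commute)

lemma is_adj_tri: "is_adj (bmap scale) (tri scale \<alpha> h \<beta>) (tri scale \<beta> (- h) \<alpha>)"
  by (auto simp: is_adj_def bmap_def tri_def algebra_simps scale_right_distrib)

lemma End_apply:
  assumes "f \<in> End scale"
  shows "f (x, u) = (x * fst (f (1, 0)) + fst (f (0, u)), scale x (snd (f (1, 0))) + snd (f (0, u)))"
proof -
  have add: "\<And>p q. f (p + q) = f p + f q"
    and scale: "\<And>c p. f (pscale scale c p) = pscale scale c (f p)"
    using assms unfolding End_def Vector_Spaces.linear_def module_hom_def module_hom_axioms_def
    by auto
  have "(x, u) = pscale scale x (1, 0) + (0, u)"
    by (simp add: pscale_def)
  then have "f (x, u) = pscale scale x (f (1, 0)) + f (0, u)"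
    using add scale by metis
  then show ?thesis
    by (simp add: pscale_def mult.commute plus_prod_def)
qed

lemma End_eq_triI:
  assumes f: "f \<in> End scale"
    and fst_V: "\<And>u. fst (f (0, u)) = 0" and snd_V: "\<And>u. snd (f (0, u)) = scale \<beta> u"
  shows "f = tri scale (fst (f (1, 0))) (snd (f (1, 0))) \<beta>"
proof
  fix p :: "'a \<times> 'b"
  show "f p = tri scale (fst (f (1, 0))) (snd (f (1, 0))) \<beta> p"
    using End_apply[OF f, of "fst p" "snd p"] by (simp add: fst_V snd_V tri_def mult.commute)
qed

lemma scale_in_span_singleton_imp_zero:
  assumes "v \<notin> span {u}" and "scale c v \<in> span {u}"
  shows "c = 0"
  using assms span_scale[of "scale c v" "{u}" "inverse c"] by (cases "c = 0") auto

lemma adjoint_pair_eq_tri: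
  assumes not_line: "\<And>u. \<exists>v. v \<notin> span {u}"
    and f: "f \<in> End scale" and g: "g \<in> End scale" and adj: "is_adj (bmap scale) f g"
  shows "f = tri scale (fst (f (1, 0))) (snd (f (1, 0))) (fst (g (1, 0)))"
    and "g = tri scale (fst (g (1, 0))) (- snd (f (1, 0))) (fst (f (1, 0)))"
proof -
  have b: "\<And>p q. bmap scale (f p) q = bmap scale p (g q)"
    using adj unfolding is_adj_def by blast
  have pairing_V: "scale (fst (f (0, u))) v = scale (- fst (g (0, v))) u" for u v
    using b[of "(0, u)" "(0, v)"] by (simp add: bmap_def scale_minus_left)
  have f_fst_V: "fst (f (0, u)) = 0" for u
  proof -
    obtain v where "v \<notin> span {u}"
      using not_line by blast
    moreover have "scale (fst (f (0, u))) v \<in> span {u}"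
      unfolding pairing_V by (rule span_scale[OF span_base]) simp
    ultimately show ?thesis
      by (rule scale_in_span_singleton_imp_zero)
  qed
  have g_fst_V: "fst (g (0, v)) = 0" for v
  proof -
    obtain u where "u \<notin> span {v}"
      using not_line by blast
    moreover have "scale (fst (g (0, v))) u \<in> span {v}"
      using pairing_V[of u v] by (auto simp: f_fst_V span_zero)
    ultimately show ?thesis
      by (rule scale_in_span_singleton_imp_zero)
  qed
  have "snd (f (0, u)) = scale (fst (g (1, 0))) u" for u
    using b[of "(0, u)" "(1, 0)"] by (simp add: bmap_def f_fst_V)
  with f f_fst_V show "f = tri scale (fst (f (1, 0))) (snd (f (1, 0))) (fst (g (1, 0)))"
    by (rule End_eq_triI)
  have "snd (g (1, 0)) = - snd (f (1, 0))"
    using b[of "(1, 0)" "(1, 0)"] by (simp add: bmap_def eq_neg_iff_add_eq_0 add.commute)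
  moreover have "snd (g (0, v)) = scale (fst (f (1, 0))) v" for v
    using b[of "(1, 0)" "(0, v)"] by (simp add: bmap_def g_fst_V)
  ultimately show "g = tri scale (fst (g (1, 0))) (- snd (f (1, 0))) (fst (f (1, 0)))"
    using End_eq_triI[OF g g_fst_V] by metis
qed

lemma bmap_orthogonal_imp_multiple:
  assumes "fst w \<noteq> 0" and "bmap scale w p = 0"
  shows "\<exists>c. p = pscale scale c w"
proof -
  have eq: "scale (fst w) (snd p) = scale (fst p) (snd w)"
    using assms(2) by (simp add: bmap_def)
  have "snd p = scale (inverse (fst w)) (scale (fst w) (snd p))"
    using assms(1) by simp
  also have "\<dots> = scale (fst p / fst w) (snd w)"
    unfolding eq by (simp add: divide_inverse mult.commute)
  finally have "snd p = scale (fst p / fst w) (snd w)" .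
  then show ?thesis
    using assms(1) by (intro exI[of _ "fst p / fst w"]) (simp add: pscale_def prod_eq_iff)
qed

lemma perp_indecomposable_bmap: "perp_indecomposable scale (bmap scale)"
proof -
  interpret P: vector_space "pscale scale"
    by (rule vector_space_pscale)
  have no_decomposition: False if X: "X \<noteq> {UNIV}" "\<forall>S \<in> X. P.subspace S"
      "\<forall>S \<in> X. \<forall>T \<in> X. S \<noteq> T \<longrightarrow> (\<forall>x \<in> S. \<forall>y \<in> T. bmap scale x y = 0)"
      "P.span (\<Union>X) = UNIV" "\<forall>Y. Y \<subset> X \<longrightarrow> P.span (\<Union>Y) \<noteq> UNIV" for X
  proof -
    have "\<not> \<Union>X \<subseteq> {w. fst w = 0}"
    proof
      assume "\<Union>X \<subseteq> {w. fst w = 0}"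
      moreover have "P.subspace {w. fst w = 0}"
        by (auto simp: P.subspace_def pscale_def)
      ultimately have "P.span (\<Union>X) \<subseteq> {w. fst w = 0}"
        by (rule P.span_minimal)
      with X(4) have "(1 :: 'a, 0 :: 'b) \<in> {w. fst w = 0}"
        by blast
      then show False
        by simp
    qed
    then obtain S0 w where S0: "S0 \<in> X" "w \<in> S0" "fst w \<noteq> 0"
      by blast
    have "T \<subseteq> S0" if T: "T \<in> X" "T \<noteq> S0" for T
    proof
      fix p assume "p \<in> T"
      then have "bmap scale w p = 0"
        using X(3) S0(1,2) T by blast
      then obtain c where "p = pscale scale c w"
        using bmap_orthogonal_imp_multiple[OF S0(3)] by blast
      then show "p \<in> S0"
        using X(2) S0 by (simp add: P.subspace_scale)
    qed
    then have U: "\<Union>X = S0"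
      using S0(1) by blast
    show False
    proof (cases "X = {S0}")
      case True
      have "P.span S0 = S0"
        using X(2) S0(1) P.span_eq_iff by blast
      then have "S0 = P.span (\<Union>X)"
        by (simp only: U)
      from this X(4) have "S0 = UNIV"
        by (rule trans)
      with True X(1) show False
        by simp
    next
      case False
      then have "P.span (\<Union>{S0}) \<noteq> UNIV"
        using X(5) S0(1) by blast
      with X(4) U show False
        by simp
    qed
  qed
  show ?thesis
    unfolding perp_indecomposable_def
    by (intro notI, elim exE conjE, rule no_decomposition; assumption)
qed

lemma exists_not_in_span_singleton_if_dim_gt_1:
  assumes "dim (UNIV :: 'b set) > 1"
  shows "\<exists>v. v \<notin> span {u}"
proof (rule ccontr)
  assume "\<not> (\<exists>v. v \<notin> span {u})"
  then have "dim (UNIV :: 'b set) \<le> card {u}"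
    by (intro dim_le_card) auto
  with assms show False
    by simp
qed

end

locale vector_space_not_line = vector_space scale
  for scale :: "'a::field \<Rightarrow> 'v::ab_group_add \<Rightarrow> 'v" +
  assumes exists_not_in_span_singleton: "\<And>u. \<exists>v. v \<notin> span {u}"
begin

abbreviation adj_ring :: "('a \<times> 'v \<Rightarrow> 'a \<times> 'v) ring" where
  "adj_ring \<equiv> Adj_ring scale (bmap scale)"

lemma tri_eq_iff: "tri scale \<alpha> h \<beta> = tri scale \<alpha>' h' \<beta>' \<longleftrightarrow> \<alpha> = \<alpha>' \<and> h = h' \<and> \<beta> = \<beta>'"
proof
  assume eq: "tri scale \<alpha> h \<beta> = tri scale \<alpha>' h' \<beta>'"
  obtain u :: 'v where "u \<noteq> 0"
    using exists_not_in_span_singleton[of 0] span_zero by metis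
  moreover have "tri scale \<alpha> h \<beta> (1, 0) = tri scale \<alpha>' h' \<beta>' (1, 0)"
    "tri scale \<alpha> h \<beta> (0, u) = tri scale \<alpha>' h' \<beta>' (0, u)"
    using eq by auto
  ultimately show "\<alpha> = \<alpha>' \<and> h = h' \<and> \<beta> = \<beta>'"
    by (auto simp: tri_def scale_right_imp_eq)
qed auto

lemma Adj_eq: "Adj scale (bmap scale) = {tri scale \<alpha> h \<beta> | \<alpha> h \<beta>. True}"
proof
  show "Adj scale (bmap scale) \<subseteq> {tri scale \<alpha> h \<beta> | \<alpha> h \<beta>. True}"
    using adjoint_pair_eq_tri(1)[OF exists_not_in_span_singleton] by (force simp: Adj_def)
  show "{tri scale \<alpha> h \<beta> | \<alpha> h \<beta>. True} \<subseteq> Adj scale (bmap scale)"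
    using tri_in_End is_adj_tri by (force simp: Adj_def)
qed

lemma adjoint_tri_unique:
  assumes "g \<in> End scale" and "is_adj (bmap scale) (tri scale \<alpha> h \<beta>) g"
  shows "g = tri scale \<beta> (- h) \<alpha>"
proof -
  note pair = adjoint_pair_eq_tri[OF exists_not_in_span_singleton tri_in_End assms]
  have "\<beta> = fst (g (1, 0))"
    using pair(1) by (simp add: tri_def tri_eq_iff)
  with pair(2) show ?thesis
    by (simp add: tri_def)
qed

lemma adj_star_tri: "adj_star scale (bmap scale) (tri scale \<alpha> h \<beta>) = tri scale \<beta> (- h) \<alpha>"
  unfolding adj_star_def by (rule the_equality) (auto simp: tri_in_End is_adj_tri adjoint_tri_unique)

lemma adj_ring_carrier: "carrier adj_ring = {tri scale \<alpha> h \<beta> | \<alpha> h \<beta>. True}"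
  by (simp add: Adj_ring_def Adj_eq)

lemma adj_ring_mult_tri:
  "tri scale \<alpha> h \<beta> \<otimes>\<^bsub>adj_ring\<^esub> tri scale \<alpha>' h' \<beta>' = tri scale (\<alpha> * \<alpha>') (scale \<alpha> h' + scale \<beta>' h) (\<beta> * \<beta>')"
  by (simp add: Adj_ring_def tri_comp_tri)

lemma adj_ring_add_tri:
  "tri scale \<alpha> h \<beta> \<oplus>\<^bsub>adj_ring\<^esub> tri scale \<alpha>' h' \<beta>' = tri scale (\<alpha> + \<alpha>') (h + h') (\<beta> + \<beta>')"
  by (simp add: Adj_ring_def tri_def fun_eq_iff algebra_simps scale_right_distrib scale_left_distrib)

lemma adj_ring_one: "\<one>\<^bsub>adj_ring\<^esub> = tri scale 1 0 1"
  by (simp add: Adj_ring_def tri_def fun_eq_iff)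

lemma adj_ring_zero: "\<zero>\<^bsub>adj_ring\<^esub> = tri scale 0 0 0"
  by (simp add: Adj_ring_def tri_def fun_eq_iff)

lemmas adj_ring_simps =
  adj_ring_carrier adj_ring_mult_tri adj_ring_add_tri adj_ring_one adj_ring_zero tri_eq_iff

lemma ring_adj_ring: "ring adj_ring"
proof (rule ringI)
  show "abelian_group adj_ring"
  proof (rule abelian_groupI)
    fix x assume "x \<in> carrier adj_ring"
    then obtain \<alpha> h \<beta> where x: "x = tri scale \<alpha> h \<beta>"
      by (auto simp: adj_ring_carrier)
    show "\<exists>y \<in> carrier adj_ring. y \<oplus>\<^bsub>adj_ring\<^esub> x = \<zero>\<^bsub>adj_ring\<^esub>"
      by (rule bexI[of _ "tri scale (- \<alpha>) (- h) (- \<beta>)"]) (auto simp: x adj_ring_simps)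
  qed (auto simp: adj_ring_simps algebra_simps)
  show "monoid adj_ring"
    by (rule monoidI) (auto simp: adj_ring_simps algebra_simps scale_right_distrib)
qed (auto simp: adj_ring_simps algebra_simps scale_right_distrib)

definition tri_diag :: "('a \<times> 'v \<Rightarrow> 'a \<times> 'v) \<Rightarrow> 'a \<times> 'a" where
  "tri_diag f = (THE p. \<exists>h. f = tri scale (fst p) h (snd p))"

lemma tri_diag_tri: "tri_diag (tri scale \<alpha> h \<beta>) = (\<alpha>, \<beta>)"
  unfolding tri_diag_def by (rule the_equality) (auto simp: tri_eq_iff)

lemma tri_diag_ring_hom: "tri_diag \<in> ring_hom adj_ring kk_ring"
  by (rule ring_hom_memI) (auto simp: adj_ring_simps tri_diag_tri kk_ring_def)

lemma a_kernel_tri_diag: "a_kernel adj_ring kk_ring tri_diag = {tri scale 0 h 0 | h. True}"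
  by (auto simp: a_kernel_def kernel_def adj_ring_simps tri_diag_tri kk_ring_def)

lemma maximal_left_ideal_diag_kernel:
  assumes "\<chi> = fst \<or> \<chi> = snd"
  shows "maximal_left_ideal {x \<in> carrier adj_ring. \<chi> (tri_diag x) = 0} adj_ring"
proof (rule ring.maximal_left_ideal_kernel[OF ring_adj_ring])
  fix c
  show "\<exists>x \<in> carrier adj_ring. \<chi> (tri_diag x) = c"
    using assms by (intro bexI[of _ "tri scale c 0 c"]) (auto simp: adj_ring_simps tri_diag_tri)
qed (use assms in \<open>auto simp: adj_ring_simps tri_diag_tri\<close>)

text \<open>\<open>1 + r n\<close> is unipotent for strictly upper triangular \<open>n\<close>.\<close>

lemma strictly_upper_tri_in_jacobson_radical: "tri scale 0 h 0 \<in> jacobson_radical adj_ring"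
proof (rule ring.left_quasiregular_in_jacobson_radical[OF ring_adj_ring])
  fix r assume "r \<in> carrier adj_ring"
  then obtain \<alpha> g \<beta> where r: "r = tri scale \<alpha> g \<beta>"
    by (auto simp: adj_ring_carrier)
  show "\<exists>y \<in> carrier adj_ring.
      y \<otimes>\<^bsub>adj_ring\<^esub> (\<one>\<^bsub>adj_ring\<^esub> \<oplus>\<^bsub>adj_ring\<^esub> r \<otimes>\<^bsub>adj_ring\<^esub> tri scale 0 h 0) = \<one>\<^bsub>adj_ring\<^esub>"
    by (rule bexI[of _ "tri scale 1 (- scale \<alpha> h) 1"]) (auto simp: r adj_ring_simps)
qed (auto simp: adj_ring_carrier)

lemma jacobson_radical_adj_ring: "jacobson_radical adj_ring = {tri scale 0 h 0 | h. True}"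
proof (rule equalityI)
  show "jacobson_radical adj_ring \<subseteq> {tri scale 0 h 0 | h. True}"
  proof
    fix x assume x: "x \<in> jacobson_radical adj_ring"
    then obtain \<alpha> h \<beta> where x_tri: "x = tri scale \<alpha> h \<beta>"
      by (auto simp: jacobson_radical_def adj_ring_carrier)
    have "x \<in> {x \<in> carrier adj_ring. \<chi> (tri_diag x) = 0}" if "\<chi> = fst \<or> \<chi> = snd" for \<chi>
      using x maximal_left_ideal_diag_kernel[OF that] unfolding jacobson_radical_def by blast
    then have "\<alpha> = 0" "\<beta> = 0"
      using x_tri by (force simp: tri_diag_tri)+
    then show "x \<in> {tri scale 0 h 0 | h. True}"
      using x_tri by blast
  qed
  show "{tri scale 0 h 0 | h. True} \<subseteq> jacobson_radical adj_ring"
    using strictly_upper_tri_in_jacobson_radical by blast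
qed

lemma jacobson_radical_eq_a_kernel:
  "jacobson_radical adj_ring = a_kernel adj_ring kk_ring tri_diag"
  by (simp only: jacobson_radical_adj_ring a_kernel_tri_diag)

lemma adj_ring_quotient_iso:
  "(\<lambda>X. the_elem (tri_diag ` X))
     \<in> ring_iso (adj_ring Quot jacobson_radical adj_ring) (kk_ring :: ('a \<times> 'a) ring)"
proof -
  interpret ring_hom_ring adj_ring kk_ring tri_diag
    by (intro ring_hom_ringI2 ring_adj_ring ring_kk_ring tri_diag_ring_hom)
  have "tri_diag ` carrier adj_ring = carrier kk_ring"
    by (force simp: adj_ring_carrier tri_diag_tri kk_ring_def intro: image_eqI[of _ _ "tri scale _ 0 _"])
  then show ?thesis
    unfolding jacobson_radical_eq_a_kernel by (rule FactRing_iso_set)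
qed

lemma adj_ring_quotient_adj_star:
  assumes "f \<in> Adj scale (bmap scale)"
  shows "the_elem (tri_diag ` (jacobson_radical adj_ring +>\<^bsub>adj_ring\<^esub> adj_star scale (bmap scale) f))
       = exch (the_elem (tri_diag ` (jacobson_radical adj_ring +>\<^bsub>adj_ring\<^esub> f)))"
proof -
  interpret ring_hom_ring adj_ring kk_ring tri_diag
    by (intro ring_hom_ringI2 ring_adj_ring ring_kk_ring tri_diag_ring_hom)
  from assms obtain \<alpha> h \<beta> where f: "f = tri scale \<alpha> h \<beta>"
    by (auto simp: Adj_eq)
  have "tri scale \<alpha> h \<beta> \<in> carrier adj_ring" "tri scale \<beta> (- h) \<alpha> \<in> carrier adj_ring"
    by (auto simp: adj_ring_carrier)
  then show ?thesis
    unfolding jacobson_radical_eq_a_kernel f adj_star_tri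
    by (simp add: tri_diag_tri exch_def)
qed

end

theorem lemma7p13:
  fixes s :: "'a::field \<Rightarrow> 'v::ab_group_add \<Rightarrow> 'v"
  assumes "vector_space s"
    and "vector_space.dim s (UNIV :: 'v set) > 1"
  shows "alternating (bmap s)
    \<and> Adj s (bmap s) = {tri s \<alpha> h \<beta> | \<alpha> h \<beta>. True}
    \<and> (\<forall>\<alpha> h \<beta>. adj_star s (bmap s) (tri s \<alpha> h \<beta>) = tri s \<beta> (- h) \<alpha>
                 \<and> tri s \<beta> (- h) \<alpha> \<in> End s \<and> is_adj (bmap s) (tri s \<alpha> h \<beta>) (tri s \<beta> (- h) \<alpha>)
                 \<and> (\<forall>g \<in> End s. is_adj (bmap s) (tri s \<alpha> h \<beta>) g \<longrightarrow> g = tri s \<beta> (- h) \<alpha>))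
    \<and> jacobson_radical (Adj_ring s (bmap s)) = {tri s 0 h 0 | h. True}
    \<and> (\<exists>\<phi>. \<phi> \<in> ring_iso (Adj_ring s (bmap s) Quot jacobson_radical (Adj_ring s (bmap s))) (kk_ring :: ('a \<times> 'a) ring)
           \<and> (\<forall>f \<in> Adj s (bmap s).
                \<phi> (jacobson_radical (Adj_ring s (bmap s)) +>\<^bsub>Adj_ring s (bmap s)\<^esub> adj_star s (bmap s) f)
                = exch (\<phi> (jacobson_radical (Adj_ring s (bmap s)) +>\<^bsub>Adj_ring s (bmap s)\<^esub> f))))
    \<and> perp_indecomposable s (bmap s)"
proof -
  interpret vector_space_not_line s
    by (intro vector_space_not_line.intro assms(1) vector_space_not_line_axioms.intro
        vector_space.exists_not_in_span_singleton_if_dim_gt_1[OF assms])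
  have "alternating (bmap s)"
    by (simp add: alternating_def bmap_def)
  moreover have "\<exists>\<phi>. \<phi> \<in> ring_iso (adj_ring Quot jacobson_radical adj_ring) (kk_ring :: ('a \<times> 'a) ring)
      \<and> (\<forall>f \<in> Adj s (bmap s). \<phi> (jacobson_radical adj_ring +>\<^bsub>adj_ring\<^esub> adj_star s (bmap s) f)
                             = exch (\<phi> (jacobson_radical adj_ring +>\<^bsub>adj_ring\<^esub> f)))"
    using adj_ring_quotient_iso adj_ring_quotient_adj_star by blast
  ultimately show ?thesis
    using Adj_eq adj_star_tri tri_in_End is_adj_tri adjoint_tri_unique jacobson_radical_adj_ring
      perp_indecomposable_bmap by blast
qed

end
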